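(* Let $G$ be a reduced nilpotent $p$-group ($p$ prime) of unbounded period. Then there is a unimodular system of equations over $G$ which has no solution in $G$.
   Context: A group is reduced if it has no nontrivial divisible subgroups (divisible: every element has an $n$-th root for all $n\ge1$). Unbounded period means there is no $n\ge1$ with $g^n=1$ for all $g\in G$. An equation over $G$ in variables $\{x_j\}$ is $w=1$ with $w\in G*F(\{x_j\})$, $F$ free on the $x_j$; systems may be infinite, in infinitely many variables. A solution in $G$ is an assignment $x_j\mapsto g_j\in G$ making all equations hold. The system is unimodular if for every prime $q$ the rows of exponent sums of the variables in the equations are linearly independent over the field of order $q$ (every finite subset of rows is linearly independent). *)

theory Defs
  imports "HOL-Algebra.Algebra"
begin

definition gcomm :: "('a, 'b) monoid_scheme \<Rightarrow> 'a \<Rightarrow> 'a \<Rightarrow> 'a" where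
  "gcomm G x y = inv\<^bsub>G\<^esub> x \<otimes>\<^bsub>G\<^esub> inv\<^bsub>G\<^esub> y \<otimes>\<^bsub>G\<^esub> x \<otimes>\<^bsub>G\<^esub> y"

fun lower_central :: "('a, 'b) monoid_scheme \<Rightarrow> nat \<Rightarrow> 'a set" where
  "lower_central G 0 = carrier G"
| "lower_central G (Suc i) =
     generate G {gcomm G x y | x y. x \<in> lower_central G i \<and> y \<in> carrier G}"

definition nilpotent_group :: "('a, 'b) monoid_scheme \<Rightarrow> bool" where
  "nilpotent_group G \<longleftrightarrow> group G \<and> (\<exists>c. lower_central G c = {\<one>\<^bsub>G\<^esub>})"

definition p_group :: "nat \<Rightarrow> ('a, 'b) monoid_scheme \<Rightarrow> bool" where
  "p_group p G \<longleftrightarrow> (\<forall>g\<in>carrier G. \<exists>k::nat. g [^]\<^bsub>G\<^esub> (p ^ k) = \<one>\<^bsub>G\<^esub>)"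

definition divisible_subgroup :: "('a, 'b) monoid_scheme \<Rightarrow> 'a set \<Rightarrow> bool" where
  "divisible_subgroup G H \<longleftrightarrow> subgroup H G \<and>
     (\<forall>h\<in>H. \<forall>n::nat. n \<ge> 1 \<longrightarrow> (\<exists>r\<in>H. r [^]\<^bsub>G\<^esub> n = h))"

definition reduced_group :: "('a, 'b) monoid_scheme \<Rightarrow> bool" where
  "reduced_group G \<longleftrightarrow> (\<forall>H. divisible_subgroup G H \<longrightarrow> H = {\<one>\<^bsub>G\<^esub>})"

definition unbounded_period :: "('a, 'b) monoid_scheme \<Rightarrow> bool" where
  "unbounded_period G \<longleftrightarrow>
     \<not> (\<exists>n::nat. n \<ge> 1 \<and> (\<forall>g\<in>carrier G. g [^]\<^bsub>G\<^esub> n = \<one>\<^bsub>G\<^esub>))"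

text \<open>An element of G * F(X) is represented by a word: a list of letters, each
  either a constant Inl g (g in G) or Inr (x, True) = x, Inr (x, False) = x^-1.
  Evaluation under an assignment is the canonical homomorphism G * F(X) -> G
  (identity on G), so solutions and exponent sums do not depend on the
  representing word.\<close>

type_synonym ('a, 'v) letter = "'a + ('v \<times> bool)"
type_synonym ('a, 'v) word = "('a, 'v) letter list"

definition word_over :: "('a, 'b) monoid_scheme \<Rightarrow> ('a, 'v) word \<Rightarrow> bool" where
  "word_over G w \<longleftrightarrow> (\<forall>g. Inl g \<in> set w \<longrightarrow> g \<in> carrier G)"

fun eval_letter :: "('a, 'b) monoid_scheme \<Rightarrow> ('v \<Rightarrow> 'a) \<Rightarrow> ('a, 'v) letter \<Rightarrow> 'a" where
  "eval_letter G f (Inl g) = g"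
| "eval_letter G f (Inr (x, True)) = f x"
| "eval_letter G f (Inr (x, False)) = inv\<^bsub>G\<^esub> (f x)"

fun eval_word :: "('a, 'b) monoid_scheme \<Rightarrow> ('v \<Rightarrow> 'a) \<Rightarrow> ('a, 'v) word \<Rightarrow> 'a" where
  "eval_word G f [] = \<one>\<^bsub>G\<^esub>"
| "eval_word G f (l # w) = eval_letter G f l \<otimes>\<^bsub>G\<^esub> eval_word G f w"

fun exp_letter :: "'v \<Rightarrow> ('a, 'v) letter \<Rightarrow> int" where
  "exp_letter x (Inl g) = 0"
| "exp_letter x (Inr (y, b)) = (if y = x then (if b then 1 else -1) else 0)"

definition exp_sum :: "('a, 'v) word \<Rightarrow> 'v \<Rightarrow> int" where
  "exp_sum w x = sum_list (map (exp_letter x) w)"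

text \<open>A system is a set E of words (equations w = 1).\<close>
definition unimodular :: "('a, 'v) word set \<Rightarrow> bool" where
  "unimodular E \<longleftrightarrow>
    (\<forall>q::int. Factorial_Ring.prime q \<longrightarrow>
      (\<forall>S c. finite S \<and> S \<subseteq> E \<and>
         (\<forall>x. (\<Sum>w\<in>S. c w * exp_sum w x) mod q = 0)
         \<longrightarrow> (\<forall>w\<in>S. c w mod q = 0)))"

definition solution_in :: "('a, 'b) monoid_scheme \<Rightarrow> ('a, 'v) word set \<Rightarrow> ('v \<Rightarrow> 'a) \<Rightarrow> bool" where
  "solution_in G E f \<longleftrightarrow>
     (\<forall>x. f x \<in> carrier G) \<and> (\<forall>w\<in>E. eval_word G f w = \<one>\<^bsub>G\<^esub>)"

end

theory Submission
  imports Defs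
begin

(* Let A = G/[G,G] be the abelianization, written multiplicatively, and A^n its subgroup of
   n-th powers.

   If A^(p^k) = A^(p^(k+1)) for some k, then G has bounded period.  Indeed, modulo the next term
   of the lower central series commutators are multilinear, so x |-> x^(p^k) maps each term
   gamma_(j+1) into gamma_(j+2).  Every element of A^(p^k) is the p-th power of an element of
   A^(p^k), so each g^(p^k) starts an infinite chain of p-th roots modulo gamma_1; raising the
   chain to the power p^(k c), where gamma_c = 1, turns it into an honest chain of p-th roots in G.
   Such a chain spans a divisible subgroup, which is trivial since G is reduced.

   Hence A^(p^k), k = 0, 1, ..., strictly decreases, and one can choose constants a_i in G whose
   partial products s_(i+1) = a_0 a_1^p ... a_i^(p^i) in A satisfy
   s_(i+1)^(p^i) not in A^(p^(2i+1)).  The system x_i = a_i x_(i+1)^p (i = 0, 1, ...) has a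
   bidiagonal exponent matrix with diagonal -1, so it is unimodular.  A solution would give
   x_0 = s_N x_N^(p^N) in A for every N, and taking N beyond the order p^M of x_0 yields
   s_N^(p^M) in A^(p^(2M+1)), a contradiction. *)

section \<open>Commutators and the lower central series\<close>

lemma (in group) mult_inv_cancel_left [simp]:
  "x \<in> carrier G \<Longrightarrow> z \<in> carrier G \<Longrightarrow> x \<otimes> (inv x \<otimes> z) = z"
  by (simp add: m_assoc [symmetric])

lemma (in group) inv_mult_cancel_left [simp]:
  "x \<in> carrier G \<Longrightarrow> z \<in> carrier G \<Longrightarrow> inv x \<otimes> (x \<otimes> z) = z"
  by (simp add: m_assoc [symmetric])

lemma (in group) subgroup_nat_pow_closed:
  "subgroup H G \<Longrightarrow> h \<in> H \<Longrightarrow> h [^] (n::nat) \<in> H"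
  using subgroup_int_pow_closed [of H h "int n"] by (simp add: int_pow_int)

context group
begin

lemma gcomm_closed [simp]: "x \<in> carrier G \<Longrightarrow> y \<in> carrier G \<Longrightarrow> gcomm G x y \<in> carrier G"
  by (simp add: gcomm_def)

lemma gcomm_one_left [simp]: "y \<in> carrier G \<Longrightarrow> gcomm G \<one> y = \<one>"
  by (simp add: gcomm_def)

lemma mult_eq_mult_gcomm:
  "x \<in> carrier G \<Longrightarrow> y \<in> carrier G \<Longrightarrow> x \<otimes> y = y \<otimes> x \<otimes> gcomm G x y"
  by (simp add: gcomm_def m_assoc)

lemma gcomm_mult_left:
  "\<lbrakk>x \<in> carrier G; x' \<in> carrier G; y \<in> carrier G\<rbrakk> \<Longrightarrow>
    gcomm G (x \<otimes> x') y = gcomm G x y \<otimes> gcomm G (gcomm G x y) x' \<otimes> gcomm G x' y"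
  by (simp add: gcomm_def m_assoc inv_mult_group)

lemma inv_gcomm: "x \<in> carrier G \<Longrightarrow> y \<in> carrier G \<Longrightarrow> inv (gcomm G x y) = gcomm G y x"
  by (simp add: gcomm_def m_assoc inv_mult_group)

lemma conj_eq_mult_gcomm:
  "x \<in> carrier G \<Longrightarrow> g \<in> carrier G \<Longrightarrow> g \<otimes> x \<otimes> inv g = x \<otimes> gcomm G x (inv g)"
  by (simp add: gcomm_def m_assoc)

lemma gcomm_mem_normal:
  assumes "N \<lhd> G" "x \<in> N" "y \<in> carrier G"
  shows "gcomm G x y \<in> N"
proof -
  interpret N: normal N G by (rule assms(1))
  have "inv x \<in> N" "inv y \<otimes> x \<otimes> y \<in> N"
    using assms(2,3) N.inv_op_closed1 by auto
  then have "inv x \<otimes> (inv y \<otimes> x \<otimes> y) \<in> N" by (rule N.m_closed)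
  then show ?thesis
    using assms(2,3) N.subset by (auto simp: gcomm_def m_assoc)
qed

lemma commutator_subgroup_normal:
  assumes "N \<lhd> G"
  defines "S \<equiv> {gcomm G x y | x y. x \<in> N \<and> y \<in> carrier G}"
  shows "generate G S \<lhd> G" and "generate G S \<subseteq> N"
proof -
  interpret N: normal N G by (rule assms(1))
  have S: "S \<subseteq> N" using gcomm_mem_normal [OF assms(1)] by (auto simp: S_def)
  then show sub: "generate G S \<subseteq> N" by (rule generate_subgroup_incl [OF _ N.subgroup_axioms])
  show "generate G S \<lhd> G"
  proof (rule normal_invI [OF generate_is_subgroup])
    show "S \<subseteq> carrier G" using S N.subset by blast
  next
    fix g h assume g: "g \<in> carrier G" and h: "h \<in> generate G S"
    then have "h \<in> N" using sub by blast
    then have "gcomm G h (inv g) \<in> generate G S" using g by (auto simp: S_def intro: generate.incl)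
    with h have "h \<otimes> gcomm G h (inv g) \<in> generate G S" by (rule generate.eng)
    with \<open>h \<in> N\<close> g show "g \<otimes> h \<otimes> inv g \<in> generate G S"
      using N.subset by (auto simp: conj_eq_mult_gcomm)
  qed
qed

end

declare lower_central.simps(2) [simp del] one_FactGroup [simp del] mult_FactGroup [simp del]

context group
begin

abbreviation \<gamma> where "\<gamma> j \<equiv> lower_central G j"
abbreviation Q where "Q j \<equiv> G Mod \<gamma> j"
abbreviation \<pi> where "\<pi> j \<equiv> \<lambda>x. \<gamma> j #> x"

lemma lower_central_normal: "\<gamma> j \<lhd> G"
  by (induction j) (simp_all add: lower_central.simps(2) normal_self commutator_subgroup_normal(1))

lemma lower_central_Suc_subset: "\<gamma> (Suc j) \<subseteq> \<gamma> j"
  unfolding lower_central.simps(2) by (rule commutator_subgroup_normal(2) [OF lower_central_normal])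

lemma lower_central_subgroup: "subgroup (\<gamma> j) G"
  using lower_central_normal normal_imp_subgroup by blast

lemma lower_central_subset_carrier: "x \<in> \<gamma> j \<Longrightarrow> x \<in> carrier G"
  using subgroup.mem_carrier [OF lower_central_subgroup] .

lemma gcomm_mem_lower_central_Suc:
  "x \<in> \<gamma> j \<Longrightarrow> y \<in> carrier G \<Longrightarrow> gcomm G x y \<in> \<gamma> (Suc j)"
  unfolding lower_central.simps(2) by (auto intro: generate.incl)

lemma lower_central_quotient_hom: "group_hom G (Q j) (\<pi> j)"
proof -
  interpret N: normal "\<gamma> j" G by (rule lower_central_normal)
  show ?thesis
    unfolding group_hom_def group_hom_axioms_def
    using N.factorgroup_is_group N.r_coset_hom_Mod is_group by blast
qed

lemma lower_central_quotient_group: "group (Q j)"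
  using lower_central_quotient_hom group_hom.axioms(2) by blast

lemma \<pi>_closed: "x \<in> carrier G \<Longrightarrow> \<pi> j x \<in> carrier (Q j)"
  using group_hom.hom_closed [OF lower_central_quotient_hom] by blast

lemma \<pi>_mult: "x \<in> carrier G \<Longrightarrow> y \<in> carrier G \<Longrightarrow> \<pi> j (x \<otimes> y) = \<pi> j x \<otimes>\<^bsub>Q j\<^esub> \<pi> j y"
  using group_hom.hom_mult [OF lower_central_quotient_hom] by blast

lemma \<pi>_pow: "x \<in> carrier G \<Longrightarrow> \<pi> j (x [^] (n::nat)) = \<pi> j x [^]\<^bsub>Q j\<^esub> n"
  using group_hom.hom_nat_pow [OF lower_central_quotient_hom] by blast

lemma \<pi>_inv: "x \<in> carrier G \<Longrightarrow> \<pi> j (inv x) = inv\<^bsub>Q j\<^esub> (\<pi> j x)"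
  using group_hom.hom_inv [OF lower_central_quotient_hom] by blast

lemma \<pi>_one [simp]: "\<pi> j \<one> = \<one>\<^bsub>Q j\<^esub>"
  using group_hom.hom_one [OF lower_central_quotient_hom] by blast

lemma \<pi>_eq_one_iff: "x \<in> carrier G \<Longrightarrow> \<pi> j x = \<one>\<^bsub>Q j\<^esub> \<longleftrightarrow> x \<in> \<gamma> j"
  using rcos_self [OF _ lower_central_subgroup] subgroup.rcos_const [OF lower_central_subgroup is_group]
  by (auto simp: one_FactGroup)

lemma \<pi>_eq_iff: "x \<in> carrier G \<Longrightarrow> y \<in> carrier G \<Longrightarrow> \<pi> j x = \<pi> j y \<longleftrightarrow> inv x \<otimes> y \<in> \<gamma> j"
proof -
  assume x: "x \<in> carrier G" and y: "y \<in> carrier G"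
  interpret Q: group "Q j" by (rule lower_central_quotient_group)
  have "\<pi> j (inv x \<otimes> y) = inv\<^bsub>Q j\<^esub> (\<pi> j x) \<otimes>\<^bsub>Q j\<^esub> \<pi> j y"
    using x y by (simp add: \<pi>_mult \<pi>_inv)
  also have "\<dots> = \<one>\<^bsub>Q j\<^esub> \<longleftrightarrow> \<pi> j x = \<pi> j y"
    using x y \<pi>_closed Q.inv_solve_left' [of "\<one>\<^bsub>Q j\<^esub>" "\<pi> j x" "\<pi> j y"] by auto
  moreover have "inv x \<otimes> y \<in> carrier G" using x y by simp
  ultimately show ?thesis using \<pi>_eq_one_iff by blast
qed

lemma \<pi>_inj_on_if_trivial:
  assumes "\<gamma> j = {\<one>}"
  shows "inj_on (\<pi> j) (carrier G)"
proof (rule inj_onI)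
  fix x y assume x: "x \<in> carrier G" and y: "y \<in> carrier G" and "\<pi> j x = \<pi> j y"
  then have "inv x \<otimes> y = \<one>" using assms \<pi>_eq_iff by blast
  then show "x = y" using x y inv_solve_left' [of \<one> x y] by simp
qed

lemma \<pi>_Suc_gcomm_eq_one:
  "x \<in> \<gamma> j \<Longrightarrow> y \<in> carrier G \<Longrightarrow> \<pi> (Suc j) (gcomm G x y) = \<one>\<^bsub>Q (Suc j)\<^esub>"
  using \<pi>_eq_one_iff gcomm_mem_lower_central_Suc lower_central_subset_carrier by simp

lemma \<pi>_Suc_central:
  assumes "x \<in> \<gamma> j" "y \<in> carrier G"
  shows "\<pi> (Suc j) x \<otimes>\<^bsub>Q (Suc j)\<^esub> \<pi> (Suc j) y = \<pi> (Suc j) y \<otimes>\<^bsub>Q (Suc j)\<^esub> \<pi> (Suc j) x"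
proof -
  have x: "x \<in> carrier G" using assms(1) lower_central_subset_carrier by blast
  interpret Q: group "Q (Suc j)" by (rule lower_central_quotient_group)
  have "\<pi> (Suc j) (x \<otimes> y) = \<pi> (Suc j) (y \<otimes> x \<otimes> gcomm G x y)"
    using mult_eq_mult_gcomm [OF x assms(2)] by simp
  then show ?thesis
    using x assms \<pi>_Suc_gcomm_eq_one by (simp add: \<pi>_mult \<pi>_closed)
qed

lemma comm_group_abelianization: "comm_group (Q 1)"
proof (rule group.group_comm_groupI [OF lower_central_quotient_group])
  fix U V assume "U \<in> carrier (Q 1)" "V \<in> carrier (Q 1)"
  then obtain x y where "x \<in> carrier G" "y \<in> carrier G" "U = \<pi> 1 x" "V = \<pi> 1 y"
    by (auto simp: carrier_FactGroup)
  then show "U \<otimes>\<^bsub>Q 1\<^esub> V = V \<otimes>\<^bsub>Q 1\<^esub> U"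
    using \<pi>_Suc_central [of x 0 y] by simp
qed

lemma \<pi>_Suc_pow_mult:
  assumes "a \<in> carrier G" "g \<in> \<gamma> j"
  shows "\<pi> (Suc j) ((a \<otimes> g) [^] (n::nat)) = \<pi> (Suc j) (a [^] n) \<otimes>\<^bsub>Q (Suc j)\<^esub> \<pi> (Suc j) (g [^] n)"
proof -
  have g: "g \<in> carrier G" using assms(2) lower_central_subset_carrier by blast
  interpret Q: group "Q (Suc j)" by (rule lower_central_quotient_group)
  have "\<pi> (Suc j) ((a \<otimes> g) [^] n) = (\<pi> (Suc j) a \<otimes>\<^bsub>Q (Suc j)\<^esub> \<pi> (Suc j) g) [^]\<^bsub>Q (Suc j)\<^esub> n"
    using assms(1) g by (simp add: \<pi>_pow \<pi>_mult)
  also have "\<dots> = \<pi> (Suc j) a [^]\<^bsub>Q (Suc j)\<^esub> n \<otimes>\<^bsub>Q (Suc j)\<^esub> \<pi> (Suc j) g [^]\<^bsub>Q (Suc j)\<^esub> n"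
    using \<pi>_Suc_central [OF assms(2,1)] assms(1) g \<pi>_closed by (intro Q.pow_mult_distrib) auto
  finally show ?thesis using assms(1) g by (simp add: \<pi>_pow)
qed

lemma \<pi>_gcomm_mult_left:
  assumes "x \<in> \<gamma> j" "x' \<in> \<gamma> j" "y \<in> carrier G"
  shows "\<pi> (Suc (Suc j)) (gcomm G (x \<otimes> x') y) =
    \<pi> (Suc (Suc j)) (gcomm G x y) \<otimes>\<^bsub>Q (Suc (Suc j))\<^esub> \<pi> (Suc (Suc j)) (gcomm G x' y)"
proof -
  have x: "x \<in> carrier G" "x' \<in> carrier G" using assms lower_central_subset_carrier by blast+
  interpret Q: group "Q (Suc (Suc j))" by (rule lower_central_quotient_group)
  have "\<pi> (Suc (Suc j)) (gcomm G (gcomm G x y) x') = \<one>\<^bsub>Q (Suc (Suc j))\<^esub>"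
    by (rule \<pi>_Suc_gcomm_eq_one [OF gcomm_mem_lower_central_Suc [OF assms(1,3)] x(2)])
  then show ?thesis using gcomm_mult_left [OF x assms(3)] x assms(3) by (simp add: \<pi>_mult \<pi>_closed)
qed

lemma \<pi>_gcomm_pow_left:
  assumes "x \<in> \<gamma> j" "y \<in> carrier G"
  shows "\<pi> (Suc (Suc j)) (gcomm G (x [^] (n::nat)) y) = \<pi> (Suc (Suc j)) (gcomm G x y) [^]\<^bsub>Q (Suc (Suc j))\<^esub> n"
proof (induction n)
  case (Suc n)
  have "x [^] n \<in> \<gamma> j" using subgroup_nat_pow_closed [OF lower_central_subgroup assms(1)] .
  then show ?case
    using \<pi>_gcomm_mult_left [OF _ assms] Suc.IH assms lower_central_subset_carrier by simp
qed (use assms(2) in simp)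

lemma pow_mem_lower_central_from_gcomm:
  assumes gens: "\<And>a y. a \<in> \<gamma> j \<Longrightarrow> y \<in> carrier G \<Longrightarrow> gcomm G a y [^] (n::nat) \<in> \<gamma> (Suc (Suc j))"
    and x: "x \<in> \<gamma> (Suc j)"
  shows "x [^] n \<in> \<gamma> (Suc (Suc j))"
proof -
  have "x \<in> generate G {gcomm G a y | a y. a \<in> \<gamma> j \<and> y \<in> carrier G}"
    using x by (simp add: lower_central.simps(2))
  then show ?thesis
  proof (induction rule: generate.induct)
    case one
    then show ?case using subgroup.one_closed [OF lower_central_subgroup] by simp
  next
    case (incl h)
    then show ?case using gens by blast
  next
    case (inv h)
    then obtain a y where h: "h = gcomm G a y" "a \<in> \<gamma> j" "y \<in> carrier G" by blast
    then have "h [^] n \<in> \<gamma> (Suc (Suc j))" using gens by simp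
    then have "inv (h [^] n) \<in> \<gamma> (Suc (Suc j))"
      by (rule subgroup.m_inv_closed [OF lower_central_subgroup])
    then show ?case using h lower_central_subset_carrier nat_pow_inv by simp
  next
    case (eng h1 h2)
    have h: "h1 \<in> \<gamma> (Suc j)" "h2 \<in> \<gamma> (Suc j)"
      using eng.hyps by (simp_all add: lower_central.simps(2))
    then have c: "h1 \<in> carrier G" "h2 \<in> carrier G" using lower_central_subset_carrier by blast+
    interpret Q: group "Q (Suc (Suc j))" by (rule lower_central_quotient_group)
    have "\<pi> (Suc (Suc j)) ((h1 \<otimes> h2) [^] n) =
        \<pi> (Suc (Suc j)) (h1 [^] n) \<otimes>\<^bsub>Q (Suc (Suc j))\<^esub> \<pi> (Suc (Suc j)) (h2 [^] n)"
      by (rule \<pi>_Suc_pow_mult [OF c(1) h(2)])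
    also have "\<dots> = \<one>\<^bsub>Q (Suc (Suc j))\<^esub>"
      using eng.IH c \<pi>_eq_one_iff [THEN iffD2, of _ "Suc (Suc j)"] by simp
    finally show ?case
      using c \<pi>_eq_one_iff [of "(h1 \<otimes> h2) [^] n" "Suc (Suc j)"] by simp
  qed
qed

end

section \<open>Chains of \<open>p\<close>-th roots in reduced \<open>p\<close>-groups\<close>

lemma linear_congruence_prime_power:
  fixes p n E :: nat and a :: int
  assumes p: "Factorial_Ring.prime p" and n: "n \<ge> 1"
  shows "\<exists>s r :: int. s * int n = a * int (p ^ n) + int (p ^ E) * r"
proof -
  define d where "d = gcd n (p ^ E)"
  obtain t where t: "t \<le> E" "d = p ^ t"
    using divides_primepow_nat [OF p] unfolding d_def by (metis gcd_dvd2)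
  have "d dvd n" unfolding d_def by simp
  then have "p ^ t \<le> n" using t n by (simp add: dvd_imp_le)
  also have "n < 2 ^ n" by (rule less_exp)
  also have "(2::nat) ^ n \<le> p ^ n" using prime_ge_2_nat [OF p] by (simp add: power_mono)
  finally have "t < n" using power_less_imp_less_exp prime_gt_1_nat [OF p] by blast
  then obtain e where e: "p ^ n = d * e" using t le_imp_power_dvd by (metis dvdE less_imp_le)
  obtain u v where "u * int n + v * int (p ^ E) = gcd (int n) (int (p ^ E))"
    using bezout_int by blast
  then have uv: "u * int n + v * int (p ^ E) = int d"
    unfolding d_def by (simp only: gcd_int_int_eq)
  have "(u * a * int e) * int n = a * int e * (u * int n + v * int (p ^ E)) - int (p ^ E) * (v * a * int e)"
    by (simp add: algebra_simps)
  also have "\<dots> = a * int e * int d - int (p ^ E) * (v * a * int e)"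
    by (simp only: uv)
  also have "\<dots> = a * int (p ^ n) + int (p ^ E) * (- v * a * int e)"
    using e by (simp add: algebra_simps)
  finally show ?thesis by blast
qed

lemma (in group) p_root_chain_pow:
  assumes "\<And>i. u i \<in> carrier G" "\<And>i. u i = u (Suc i) [^] (p::nat)"
  shows "u i = u (i + n) [^] (p ^ n)"
proof (induction n)
  case (Suc n)
  have "u (i + n) [^] (p ^ n) = u (i + Suc n) [^] (p * p ^ n)"
    using assms nat_pow_pow by (metis add_Suc_right)
  with Suc.IH show ?case by simp
qed (use assms(1) in simp)

lemma (in group) p_root_chain_int_pow:
  assumes "\<And>i. u i \<in> carrier G" "\<And>i. u i = u (Suc i) [^] (p::nat)"
  shows "u i [^] (a::int) = u (i + n) [^] (int (p ^ n) * a)"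
  using p_root_chain_pow [of u p i n, OF assms] assms(1) int_pow_pow
  by (metis int_pow_int)

text \<open>The powers of the members of the chain form a subgroup that is divisible: by \<open>p\<close> along the
  chain, and by numbers prime to \<open>p\<close> because every element has \<open>p\<close>-power order.\<close>

lemma (in group) p_root_chain_trivial:
  assumes p: "Factorial_Ring.prime p" and pgroup: "p_group p G" and reduced: "reduced_group G"
    and u: "\<And>i. u i \<in> carrier G" "\<And>i. u i = u (Suc i) [^] (p::nat)"
  shows "u 0 = \<one>"
proof -
  define H where "H = {u i [^] a | i (a::int). True}"
  have "subgroup H G"
  proof (rule subgroupI)
    show "H \<subseteq> carrier G" "H \<noteq> {}" unfolding H_def using u(1) by auto
  next
    fix g assume "g \<in> H"
    then obtain i a where "g = u i [^] (a::int)" unfolding H_def by blast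
    then have "inv g = u i [^] (- a)" using u(1) int_pow_neg by simp
    then show "inv g \<in> H" unfolding H_def by blast
  next
    fix g g' assume "g \<in> H" "g' \<in> H"
    then obtain i a i' a' where g: "g = u i [^] (a::int)" "g' = u i' [^] (a'::int)"
      unfolding H_def by blast
    have "g = u (i + i') [^] (int (p ^ i') * a)" "g' = u (i + i') [^] (int (p ^ i) * a')"
      using g p_root_chain_int_pow [of u p, OF u] by (metis add.commute)+
    then have "g \<otimes> g' = u (i + i') [^] (int (p ^ i') * a + int (p ^ i) * a')"
      using int_pow_mult u(1) by simp
    then show "g \<otimes> g' \<in> H" unfolding H_def by blast
  qed
  moreover have "\<exists>r\<in>H. r [^] n = h" if h: "h \<in> H" and n: "n \<ge> 1" for h and n :: nat
  proof -
    obtain i a where ha: "h = u i [^] (a::int)" using h unfolding H_def by blast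
    let ?y = "u (i + n)"
    obtain E where "?y [^] (p ^ E) = \<one>" using pgroup u(1) unfolding p_group_def by blast
    then have E: "?y [^] int (p ^ E) = \<one>" by (simp only: int_pow_int)
    obtain s r where sr: "s * int n = a * int (p ^ n) + int (p ^ E) * r"
      using linear_congruence_prime_power [OF p n] by blast
    have "(?y [^] s) [^] n = ?y [^] (a * int (p ^ n)) \<otimes> (?y [^] int (p ^ E)) [^] r"
      using u(1) int_pow_pow int_pow_mult by (metis int_pow_int sr)
    also have "\<dots> = h"
      using E u(1) ha p_root_chain_int_pow [of u p i a n, OF u] by (simp add: mult.commute)
    finally show ?thesis unfolding H_def by blast
  qed
  ultimately have "divisible_subgroup G H" unfolding divisible_subgroup_def by blast
  then have "H = {\<one>}" using reduced unfolding reduced_group_def by blast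
  moreover have "u 0 [^] (1::int) \<in> H" unfolding H_def by blast
  ultimately show ?thesis using u(1) [of 0] by simp
qed

section \<open>Powers in the abelianization\<close>

definition pow_image :: "('a, 'b) monoid_scheme \<Rightarrow> nat \<Rightarrow> 'a set" where
  "pow_image H n = (\<lambda>x. x [^]\<^bsub>H\<^esub> n) ` carrier H"

lemma (in monoid) pow_image_mult_right_mono:
  assumes "pow_image G m \<subseteq> pow_image G n"
  shows "pow_image G (m * l) \<subseteq> pow_image G (n * l)"
proof
  fix z assume "z \<in> pow_image G (m * l)"
  then obtain x where x: "x \<in> carrier G" "z = x [^] (m * l)" by (auto simp: pow_image_def)
  then have "x [^] m \<in> pow_image G n" using assms by (auto simp: pow_image_def)
  then obtain y where y: "y \<in> carrier G" "x [^] m = y [^] n" by (auto simp: pow_image_def)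
  then have "z = y [^] (n * l)" using x by (simp add: nat_pow_pow [symmetric])
  then show "z \<in> pow_image G (n * l)" using y(1) by (auto simp: pow_image_def)
qed

lemma (in monoid) pow_image_prime_power_stable:
  assumes stable: "pow_image G (p ^ k) \<subseteq> pow_image G (p ^ Suc k)" and "k \<le> m"
  shows "pow_image G (p ^ k) \<subseteq> pow_image G (p ^ m)"
  using assms(2)
proof (induction m rule: dec_induct)
  case (step m)
  have "pow_image G (p ^ m) = pow_image G (p ^ k * p ^ (m - k))"
    using step.hyps by (simp add: power_add [symmetric])
  also have "\<dots> \<subseteq> pow_image G (p ^ Suc k * p ^ (m - k))"
    by (rule pow_image_mult_right_mono [OF stable])
  also have "p ^ Suc k * p ^ (m - k) = p ^ Suc m"
    using step.hyps by (simp add: power_add [symmetric])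
  finally show ?case using step.IH by blast
qed simp

lemma (in monoid) pow_image_stable_root:
  assumes stable: "pow_image G (p ^ k) \<subseteq> pow_image G (p ^ Suc k)" and x: "x \<in> pow_image G (p ^ k)"
  shows "\<exists>y \<in> pow_image G (p ^ k). x = y [^] p"
proof -
  obtain w where w: "w \<in> carrier G" "x = w [^] (p ^ Suc k)"
    using stable x by (auto simp: pow_image_def)
  then have "x = (w [^] (p ^ k)) [^] p" by (simp add: nat_pow_pow mult.commute)
  with w(1) show ?thesis by (auto simp: pow_image_def)
qed

lemma (in group) pow_image_quotient:
  "pow_image (Q j) n = (\<lambda>w. \<pi> j (w [^] n)) ` carrier G"
  by (auto simp: pow_image_def carrier_FactGroup \<pi>_pow)

locale pow_stable_abelianization = group G for G (structure) +
  fixes p k :: nat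
  assumes p_group: "p_group p G"
    and stable: "pow_image (G Mod lower_central G 1) (p ^ k) \<subseteq>
      pow_image (G Mod lower_central G 1) (p ^ Suc k)"
begin

lemma stable_pow_image_mono:
  "k \<le> m \<Longrightarrow> pow_image (Q 1) (p ^ k) \<subseteq> pow_image (Q 1) (p ^ m)"
  using group.is_monoid [OF lower_central_quotient_group] stable
  by (rule monoid.pow_image_prime_power_stable)

text \<open>Write \<open>a^(p^k) = w^(p^m) g\<close> with \<open>g \<in> \<gamma> 1\<close> and \<open>y^(p^m) = 1\<close>.  Modulo \<open>\<gamma> 2\<close>, where
  commutators are bilinear, \<open>[a, y]^(p^k)\<close> becomes \<open>[w, y]^(p^m) = [y^(p^m), w]\<inverse> = 1\<close>.\<close>

lemma gcomm_pow_mem_lower_central_2: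
  assumes a: "a \<in> carrier G" and y: "y \<in> carrier G"
  shows "gcomm G a y [^] (p ^ k) \<in> \<gamma> (Suc (Suc 0))"
proof -
  interpret Q: group "Q (Suc (Suc 0))" by (rule lower_central_quotient_group)
  let ?h = "\<pi> (Suc (Suc 0))"
  obtain M where "y [^] (p ^ M) = \<one>" using p_group y unfolding p_group_def by blast
  then have ym: "y [^] (p ^ (k + M)) = \<one>"
    using y by (simp add: power_add nat_pow_pow [symmetric] mult.commute)
  have "\<pi> 1 (a [^] (p ^ k)) \<in> pow_image (Q 1) (p ^ (k + M))"
    using stable_pow_image_mono [of "k + M"] a by (auto simp: pow_image_quotient)
  then obtain w where w: "w \<in> carrier G" "\<pi> 1 (w [^] (p ^ (k + M))) = \<pi> 1 (a [^] (p ^ k))"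
    by (auto simp: pow_image_quotient)
  define g where "g = inv (w [^] (p ^ (k + M))) \<otimes> a [^] (p ^ k)"
  have g: "g \<in> \<gamma> 1" "g \<in> carrier G" using w a \<pi>_eq_iff by (simp_all add: g_def)
  have ak: "a [^] (p ^ k) = w [^] (p ^ (k + M)) \<otimes> g"
    using w a by (simp add: g_def m_assoc [symmetric])
  have "?h (gcomm G a y [^] (p ^ k)) = ?h (gcomm G (a [^] (p ^ k)) y)"
    using \<pi>_gcomm_pow_left [of a 0 y] a y by (simp add: \<pi>_pow)
  also have "\<dots> = ?h (gcomm G (w [^] (p ^ (k + M))) y) \<otimes>\<^bsub>Q (Suc (Suc 0))\<^esub> ?h (gcomm G g y)"
    using ak \<pi>_gcomm_mult_left [of "w [^] (p ^ (k + M))" 0 g y] w g y by simp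
  also have "?h (gcomm G g y) = \<one>\<^bsub>Q (Suc (Suc 0))\<^esub>"
    using \<pi>_Suc_gcomm_eq_one [of g 1 y] g y by simp
  also have "?h (gcomm G (w [^] (p ^ (k + M))) y) = ?h (gcomm G w y) [^]\<^bsub>Q (Suc (Suc 0))\<^esub> (p ^ (k + M))"
    using \<pi>_gcomm_pow_left [of w 0 y] w y by simp
  also have "?h (gcomm G w y) = inv\<^bsub>Q (Suc (Suc 0))\<^esub> ?h (gcomm G y w)"
    using inv_gcomm [OF y w(1)] \<pi>_inv w y by (metis gcomm_closed)
  also have "(inv\<^bsub>Q (Suc (Suc 0))\<^esub> ?h (gcomm G y w)) [^]\<^bsub>Q (Suc (Suc 0))\<^esub> (p ^ (k + M))
      = inv\<^bsub>Q (Suc (Suc 0))\<^esub> ?h (gcomm G (y [^] (p ^ (k + M))) w)"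
    using \<pi>_gcomm_pow_left [of y 0 w] Q.nat_pow_inv \<pi>_closed w y by simp
  finally have "?h (gcomm G a y [^] (p ^ k)) = \<one>\<^bsub>Q (Suc (Suc 0))\<^esub>"
    using ym w by simp
  then show ?thesis using \<pi>_eq_one_iff a y by simp
qed

lemma pow_mem_lower_central_Suc: "x \<in> \<gamma> (Suc j) \<Longrightarrow> x [^] (p ^ k) \<in> \<gamma> (Suc (Suc j))"
proof (induction j arbitrary: x)
  case 0
  show ?case
    by (rule pow_mem_lower_central_from_gcomm [OF _ 0]) (simp add: gcomm_pow_mem_lower_central_2)
next
  case (Suc j)
  show ?case
  proof (rule pow_mem_lower_central_from_gcomm [OF _ Suc.prems])
    fix a y assume a: "a \<in> \<gamma> (Suc j)" and y: "y \<in> carrier G"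
    have a': "a \<in> carrier G" using a by (rule lower_central_subset_carrier)
    have "gcomm G (a [^] (p ^ k)) y \<in> \<gamma> (Suc (Suc (Suc j)))"
      using Suc.IH [OF a] y by (rule gcomm_mem_lower_central_Suc)
    then have "\<pi> (Suc (Suc (Suc j))) (gcomm G (a [^] (p ^ k)) y) = \<one>\<^bsub>Q (Suc (Suc (Suc j)))\<^esub>"
      using \<pi>_eq_one_iff a' y by simp
    then have "\<pi> (Suc (Suc (Suc j))) (gcomm G a y [^] (p ^ k)) = \<one>\<^bsub>Q (Suc (Suc (Suc j)))\<^esub>"
      using \<pi>_gcomm_pow_left [OF a y, of "p ^ k"] a' y by (simp add: \<pi>_pow)
    then show "gcomm G a y [^] (p ^ k) \<in> \<gamma> (Suc (Suc (Suc j)))"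
      using \<pi>_eq_one_iff a' y by simp
  qed
qed

lemma \<pi>_pow_congruent:
  assumes x: "x \<in> carrier G" "x' \<in> carrier G" and "\<pi> 1 x = \<pi> 1 x'"
  shows "\<pi> (Suc j) (x [^] (p ^ (k * j))) = \<pi> (Suc j) (x' [^] (p ^ (k * j)))"
proof (induction j)
  case 0
  then show ?case using assms by simp
next
  case (Suc j)
  let ?X = "x [^] (p ^ (k * j))" and ?X' = "x' [^] (p ^ (k * j))"
  define g where "g = inv ?X' \<otimes> ?X"
  have g: "g \<in> \<gamma> (Suc j)" using Suc.IH [symmetric] x \<pi>_eq_iff g_def by simp
  then have "g \<in> carrier G" by (rule lower_central_subset_carrier)
  then have "\<pi> (Suc (Suc j)) (?X [^] (p ^ k)) = \<pi> (Suc (Suc j)) (?X' [^] (p ^ k))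
      \<otimes>\<^bsub>Q (Suc (Suc j))\<^esub> \<pi> (Suc (Suc j)) (g [^] (p ^ k))"
    using \<pi>_Suc_pow_mult [OF _ g, of ?X'] x by (simp add: g_def m_assoc [symmetric])
  also have "\<pi> (Suc (Suc j)) (g [^] (p ^ k)) = \<one>\<^bsub>Q (Suc (Suc j))\<^esub>"
    using pow_mem_lower_central_Suc [OF g] \<open>g \<in> carrier G\<close> \<pi>_eq_one_iff by simp
  finally show ?case
    using x lower_central_quotient_group [of "Suc (Suc j)"]
    by (simp add: nat_pow_pow power_add mult.commute \<pi>_closed group.is_monoid monoid.r_one)
qed

lemma stable_root_step:
  assumes "x \<in> carrier G" "\<pi> 1 x \<in> pow_image (Q 1) (p ^ k)"
  shows "\<exists>y \<in> carrier G. \<pi> 1 y \<in> pow_image (Q 1) (p ^ k) \<and> \<pi> 1 x = \<pi> 1 (y [^] p)"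
proof -
  obtain Y where Y: "Y \<in> pow_image (Q 1) (p ^ k)" "\<pi> 1 x = Y [^]\<^bsub>Q 1\<^esub> p"
    using monoid.pow_image_stable_root [OF group.is_monoid [OF lower_central_quotient_group] stable assms(2)]
    by blast
  then obtain v where v: "v \<in> carrier G" "Y = \<pi> 1 (v [^] (p ^ k))"
    by (auto simp: pow_image_quotient)
  then have "\<pi> 1 (v [^] (p ^ k)) \<in> pow_image (Q 1) (p ^ k)" "\<pi> 1 x = \<pi> 1 ((v [^] (p ^ k)) [^] p)"
    using Y by (auto simp: \<pi>_pow)
  with v(1) show ?thesis by blast
qed

lemma bounded_period:
  assumes p: "Factorial_Ring.prime p" and reduced: "reduced_group G" and nilpotent: "\<gamma> c = {\<one>}"
    and g: "g \<in> carrier G"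
  shows "g [^] (p ^ k * p ^ (k * c)) = \<one>"
proof -
  have trivial: "\<gamma> (Suc c) = {\<one>}"
    using lower_central_Suc_subset [of c] nilpotent subgroup.one_closed [OF lower_central_subgroup] by blast
  define x where "x = g [^] (p ^ k)"
  have x: "x \<in> carrier G" "\<pi> 1 x \<in> pow_image (Q 1) (p ^ k)"
    using g by (auto simp: x_def pow_image_quotient)
  obtain y where y: "\<And>i. y i \<in> carrier G" "y 0 = x" "\<And>i. \<pi> 1 (y i) = \<pi> 1 (y (Suc i) [^] p)"
    using dependent_nat_choice [of "\<lambda>n y. y \<in> carrier G \<and> \<pi> 1 y \<in> pow_image (Q 1) (p ^ k) \<and> (n = 0 \<longrightarrow> y = x)"
        "\<lambda>_ y y'. \<pi> 1 y = \<pi> 1 (y' [^] p)"] x stable_root_step by blast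
  define w where "w i = y i [^] (p ^ (k * c))" for i
  have w: "w i \<in> carrier G" for i using y(1) by (simp add: w_def)
  have "w i = w (Suc i) [^] p" for i
  proof (rule inj_onD [OF \<pi>_inj_on_if_trivial [OF trivial]])
    show "\<pi> (Suc c) (w i) = \<pi> (Suc c) (w (Suc i) [^] p)"
      using \<pi>_pow_congruent [of "y i" "y (Suc i) [^] p" c] y(1,3)
      by (simp add: w_def nat_pow_pow mult.commute)
  qed (use w in auto)
  then have "w 0 = \<one>" by (rule p_root_chain_trivial [OF p p_group reduced w])
  then show ?thesis using g by (simp add: w_def y(2) x_def nat_pow_pow power_add)
qed

end

lemma (in group) abelianization_pow_image_strict:
  assumes "Factorial_Ring.prime p" "\<gamma> c = {\<one>}" "p_group p G" "reduced_group G" "unbounded_period G"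
  shows "\<not> pow_image (Q 1) (p ^ k) \<subseteq> pow_image (Q 1) (p ^ Suc k)"
proof
  assume "pow_image (Q 1) (p ^ k) \<subseteq> pow_image (Q 1) (p ^ Suc k)"
  then interpret pow_stable_abelianization G p k
    using assms(3) by unfold_locales
  have "g [^] (p ^ k * p ^ (k * c)) = \<one>" if "g \<in> carrier G" for g
    by (rule bounded_period [OF assms(1,4,2) that])
  moreover have "p ^ k * p ^ (k * c) \<ge> 1" using prime_gt_0_nat [OF assms(1)] by simp
  ultimately show False using assms(5) unfolding unbounded_period_def by blast
qed

lemma (in comm_group) subgroup_pow_image: "subgroup (pow_image G n) G"
proof (rule subgroupI)
  show "pow_image G n \<subseteq> carrier G" "pow_image G n \<noteq> {}" by (auto simp: pow_image_def)
next
  fix x assume "x \<in> pow_image G n"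
  then show "inv x \<in> pow_image G n" by (auto simp: pow_image_def nat_pow_inv [symmetric])
next
  fix x y assume "x \<in> pow_image G n" "y \<in> pow_image G n"
  then show "x \<otimes> y \<in> pow_image G n" by (auto simp: pow_image_def nat_pow_distrib [symmetric])
qed

text \<open>Greedy choice: \<open>a\<^sub>i = b\<^sub>2\<^sub>i\<close> if \<open>s\<^sub>i^(p^i)\<close> is a \<open>p^(2i+1)\<close>-th power, and \<open>a\<^sub>i = 1\<close> otherwise;
  in the first case \<open>s\<^sub>i\<^sub>+\<^sub>1^(p^i) = s\<^sub>i^(p^i) b\<^sub>2\<^sub>i^(p^(2i))\<close> cannot be one, by the choice of \<open>b\<^sub>2\<^sub>i\<close>.\<close>

lemma (in comm_group) exists_partial_products_avoiding_powers:
  assumes b: "\<And>k. b k \<in> carrier G" "\<And>k. b k [^] (p ^ k) \<notin> pow_image G (p ^ Suc k)"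
  shows "\<exists>a s. (\<forall>i. a i \<in> carrier G) \<and> s 0 = \<one> \<and> (\<forall>i. s (Suc i) = s i \<otimes> a i [^] (p ^ i)) \<and>
    (\<forall>i. s (Suc i) [^] (p ^ i) \<notin> pow_image G (p ^ Suc (2 * i)))"
proof -
  define A where "A i t = (if t [^] (p ^ i) \<in> pow_image G (p ^ Suc (2 * i)) then b (2 * i) else \<one>)"
    for i t
  define s where "s = rec_nat \<one> (\<lambda>i t. t \<otimes> A i t [^] (p ^ i))"
  define a where "a i = A i (s i)" for i
  have a: "a i \<in> carrier G" for i using b(1) by (simp add: a_def A_def)
  have s: "s 0 = \<one>" "s (Suc i) = s i \<otimes> a i [^] (p ^ i)" for i by (simp_all add: s_def a_def)
  have s_closed: "s i \<in> carrier G" for i by (induction i) (simp_all add: s a)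
  have "s (Suc i) [^] (p ^ i) \<notin> pow_image G (p ^ Suc (2 * i))" for i
  proof (cases "s i [^] (p ^ i) \<in> pow_image G (p ^ Suc (2 * i))")
    case True
    interpret P: subgroup "pow_image G (p ^ Suc (2 * i))" G by (rule subgroup_pow_image)
    have "s (Suc i) [^] (p ^ i) = s i [^] (p ^ i) \<otimes> b (2 * i) [^] (p ^ (2 * i))"
      using True s_closed b(1)
      by (simp add: s a_def A_def nat_pow_distrib nat_pow_pow power_add [symmetric] mult_2)
    then have "b (2 * i) [^] (p ^ (2 * i)) = inv (s i [^] (p ^ i)) \<otimes> s (Suc i) [^] (p ^ i)"
      using s_closed b(1) by (simp add: inv_solve_left)
    then show ?thesis using True b(2) [of "2 * i"] P.m_closed P.m_inv_closed by fastforce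
  next
    case False
    then show ?thesis using s_closed by (simp add: s a_def A_def)
  qed
  with a s show ?thesis by blast
qed

lemma (in comm_group) p_chain_with_partial_products:
  fixes p :: nat
  assumes a: "\<And>i. a i \<in> carrier G" and s: "s 0 = \<one>" "\<And>i. s (Suc i) = s i \<otimes> a i [^] (p ^ i)"
    and x: "\<And>i. x i \<in> carrier G" "\<And>i. x i = a i \<otimes> x (Suc i) [^] p"
  shows "x 0 = s n \<otimes> x n [^] (p ^ n)"
proof (induction n)
  case 0
  then show ?case using x(1) by (simp add: s(1))
next
  case (Suc n)
  have s_closed: "s i \<in> carrier G" for i by (induction i) (simp_all add: s a)
  have "x n [^] (p ^ n) = (a n \<otimes> x (Suc n) [^] p) [^] (p ^ n)"
    by (simp only: x(2) [of n])
  also have "\<dots> = a n [^] (p ^ n) \<otimes> x (Suc n) [^] (p ^ Suc n)"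
    using a x(1) by (simp add: nat_pow_distrib nat_pow_pow)
  finally have "x n [^] (p ^ n) = a n [^] (p ^ n) \<otimes> x (Suc n) [^] (p ^ Suc n)" .
  with Suc.IH show ?case using x(1) a s_closed by (simp add: s(2) m_assoc)
qed

lemma (in comm_group) p_chain_not_p_torsion:
  assumes a: "\<And>i. a i \<in> carrier G" and s: "s 0 = \<one>" "\<And>i. s (Suc i) = s i \<otimes> a i [^] (p ^ i)"
    and avoid: "\<And>i. s (Suc i) [^] (p ^ i) \<notin> pow_image G (p ^ Suc (2 * i))"
    and x: "\<And>i. x i \<in> carrier G" "\<And>i. x i = a i \<otimes> x (Suc i) [^] p"
  shows "x 0 [^] (p ^ M) \<noteq> \<one>"
proof
  assume torsion: "x 0 [^] (p ^ M) = \<one>"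
  have s_closed: "s i \<in> carrier G" for i by (induction i) (simp_all add: s a)
  have "x 0 [^] (p ^ M) = s (Suc M) [^] (p ^ M) \<otimes> x (Suc M) [^] (p ^ Suc M * p ^ M)"
    using p_chain_with_partial_products [OF a s x, of "Suc M"] x(1) s_closed
    by (simp add: nat_pow_distrib nat_pow_pow del: power_Suc)
  also have "p ^ Suc M * p ^ M = p ^ Suc (2 * M)" by (simp add: power_add mult_2 mult.assoc)
  finally have "x 0 [^] (p ^ M) = s (Suc M) [^] (p ^ M) \<otimes> x (Suc M) [^] (p ^ Suc (2 * M))" .
  then have "s (Suc M) [^] (p ^ M) = inv (x (Suc M)) [^] (p ^ Suc (2 * M))"
    using torsion x(1) s_closed by (simp add: nat_pow_inv inv_equality)
  then show False using avoid [of M] x(1) by (auto simp: pow_image_def)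
qed

section \<open>The system \<open>x\<^sub>i = a\<^sub>i x\<^sub>i\<^sub>+\<^sub>1\<^sup>p\<close>\<close>

definition chain_word :: "(nat \<Rightarrow> 'a) \<Rightarrow> nat \<Rightarrow> nat \<Rightarrow> ('a, nat) word" where
  "chain_word a p i = Inr (i, False) # Inl (a i) # replicate p (Inr (Suc i, True))"

lemma inj_chain_word: "inj (chain_word a p)"
  by (rule injI) (simp add: chain_word_def)

lemma exp_sum_chain_word:
  "exp_sum (chain_word a p i) x = (if x = i then -1 else 0) + (if x = Suc i then int p else 0)"
  by (auto simp: chain_word_def exp_sum_def sum_list_replicate)

lemma sum_exp_sum_chain_word:
  assumes "finite I"
  shows "(\<Sum>i\<in>I. c i * exp_sum (chain_word a p i) x) =
    (if x \<in> I then - c x else 0) + (case x of 0 \<Rightarrow> 0 | Suc x' \<Rightarrow> if x' \<in> I then int p * c x' else 0)"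
proof -
  have "(\<Sum>i\<in>I. c i * exp_sum (chain_word a p i) x) =
      (\<Sum>i\<in>I. (if x = i then - c i else 0) + (if x = Suc i then int p * c i else 0))"
    by (rule sum.cong) (auto simp: exp_sum_chain_word)
  also have "\<dots> = (\<Sum>i\<in>I. if x = i then - c i else 0) + (\<Sum>i\<in>I. if x = Suc i then int p * c i else 0)"
    by (rule sum.distrib)
  finally show ?thesis using assms by (cases x) (simp_all add: sum.delta')
qed

lemma unimodular_chain_system: "unimodular (range (chain_word a p))"
  unfolding unimodular_def
proof (intro allI impI ballI)
  fix q :: int and S c w
  assume "Factorial_Ring.prime q"
    and S: "finite S \<and> S \<subseteq> range (chain_word a p) \<and> (\<forall>x. (\<Sum>w\<in>S. c w * exp_sum w x) mod q = 0)"
    and "w \<in> S"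
  define I where "I = chain_word a p -` S"
  have SI: "S = chain_word a p ` I" using S unfolding I_def by blast
  have I: "finite I"
    unfolding I_def using S finite_vimageI [OF _ inj_chain_word] by blast
  have rows: "(\<Sum>i\<in>I. c (chain_word a p i) * exp_sum (chain_word a p i) x) mod q = 0" for x
    using S unfolding SI by (simp add: sum.reindex inj_on_subset [OF inj_chain_word])
  have "q dvd c (chain_word a p i)" if "i \<in> I" for i
    using that
  proof (induction i)
    case 0
    then show ?case using rows [of 0] I by (simp add: sum_exp_sum_chain_word mod_eq_0_iff_dvd)
  next
    case (Suc i)
    have "q dvd (- c (chain_word a p (Suc i)) +
        (if i \<in> I then int p * c (chain_word a p i) else 0))"
      using rows [of "Suc i"] I Suc.prems by (simp add: sum_exp_sum_chain_word mod_eq_0_iff_dvd)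
    moreover have "q dvd (if i \<in> I then int p * c (chain_word a p i) else 0)"
      using Suc.IH by auto
    ultimately show ?case by (metis dvd_add_left_iff dvd_minus_iff)
  qed
  then show "c w mod q = 0" using \<open>w \<in> S\<close> SI by auto
qed

lemma (in group) eval_chain_word:
  assumes "\<And>x. f x \<in> carrier G" "a i \<in> carrier G"
  shows "eval_word G f (chain_word a p i) = inv (f i) \<otimes> (a i \<otimes> f (Suc i) [^] p)"
proof -
  have "eval_word G f (replicate n (Inr (Suc i, True))) = f (Suc i) [^] n" for n
  proof (induction n)
    case (Suc n)
    then have "eval_word G f (replicate (Suc n) (Inr (Suc i, True))) = f (Suc i) \<otimes> f (Suc i) [^] n"
      by simp
    then show ?case using assms(1) by (metis nat_pow_Suc2)
  qed simp
  then show ?thesis by (simp add: chain_word_def)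
qed

lemma (in group) solution_in_chain_system:
  assumes "solution_in G (range (chain_word a p)) f" and "\<And>i. a i \<in> carrier G"
  shows "f i = a i \<otimes> f (Suc i) [^] p"
proof -
  have f: "\<And>x. f x \<in> carrier G" and "eval_word G f (chain_word a p i) = \<one>"
    using assms(1) unfolding solution_in_def by blast+
  then have "inv (f i) \<otimes> (a i \<otimes> f (Suc i) [^] p) = \<one>"
    using assms(2) by (simp add: eval_chain_word)
  then show ?thesis
    using f assms(2) inv_solve_left' [of \<one> "f i" "a i \<otimes> f (Suc i) [^] p"] by simp
qed

lemma (in group) chain_system_unsolvable:
  assumes pgroup: "p_group p G" and a: "\<And>i. a i \<in> carrier G"
    and s: "s 0 = \<one>\<^bsub>Q 1\<^esub>" "\<And>i. s (Suc i) = s i \<otimes>\<^bsub>Q 1\<^esub> \<pi> 1 (a i) [^]\<^bsub>Q 1\<^esub> (p ^ i)"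
    and avoid: "\<And>i. s (Suc i) [^]\<^bsub>Q 1\<^esub> (p ^ i) \<notin> pow_image (Q 1) (p ^ Suc (2 * i))"
  shows "\<not> solution_in G (range (chain_word a p)) f"
proof
  assume sol: "solution_in G (range (chain_word a p)) f"
  then have f: "\<And>x. f x \<in> carrier G" unfolding solution_in_def by blast
  interpret A: comm_group "Q 1" by (rule comm_group_abelianization)
  obtain M where M: "f 0 [^] (p ^ M) = \<one>" using pgroup f unfolding p_group_def by blast
  have "\<pi> 1 (f 0) [^]\<^bsub>Q 1\<^esub> (p ^ M) \<noteq> \<one>\<^bsub>Q 1\<^esub>"
  proof (rule A.p_chain_not_p_torsion [OF _ s avoid])
    show "\<pi> 1 (f i) = \<pi> 1 (a i) \<otimes>\<^bsub>Q 1\<^esub> \<pi> 1 (f (Suc i)) [^]\<^bsub>Q 1\<^esub> p" for i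
      using solution_in_chain_system [OF sol a, of i] a f by (simp add: \<pi>_mult \<pi>_pow)
  qed (use a f \<pi>_closed in auto)
  with M f show False by (simp add: \<pi>_pow [symmetric])
qed

lemma (in group) exists_unsolvable_chain_system:
  assumes pgroup: "p_group p G"
    and strict: "\<And>k. \<not> pow_image (Q 1) (p ^ k) \<subseteq> pow_image (Q 1) (p ^ Suc k)"
  shows "\<exists>a. (\<forall>i. a i \<in> carrier G) \<and> \<not> (\<exists>f. solution_in G (range (chain_word a p)) f)"
proof -
  interpret A: comm_group "Q 1" by (rule comm_group_abelianization)
  have "\<exists>b. b \<in> carrier (Q 1) \<and> b [^]\<^bsub>Q 1\<^esub> (p ^ k) \<notin> pow_image (Q 1) (p ^ Suc k)" for k
    using strict [of k] by (auto simp: pow_image_def)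
  then obtain b where "\<And>k. b k \<in> carrier (Q 1)" "\<And>k. b k [^]\<^bsub>Q 1\<^esub> (p ^ k) \<notin> pow_image (Q 1) (p ^ Suc k)"
    by metis
  then obtain a' s where a': "\<And>i. a' i \<in> carrier (Q 1)"
    and s: "s 0 = \<one>\<^bsub>Q 1\<^esub>" "\<And>i. s (Suc i) = s i \<otimes>\<^bsub>Q 1\<^esub> a' i [^]\<^bsub>Q 1\<^esub> (p ^ i)"
    and avoid: "\<And>i. s (Suc i) [^]\<^bsub>Q 1\<^esub> (p ^ i) \<notin> pow_image (Q 1) (p ^ Suc (2 * i))"
    using A.exists_partial_products_avoiding_powers by metis
  obtain a where a: "\<And>i. a i \<in> carrier G" "\<And>i. \<pi> 1 (a i) = a' i"
    using a' by (simp add: carrier_FactGroup image_iff) metis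
  then have "s (Suc i) = s i \<otimes>\<^bsub>Q 1\<^esub> \<pi> 1 (a i) [^]\<^bsub>Q 1\<^esub> (p ^ i)" for i
    using s(2) by simp
  then have "\<not> solution_in G (range (chain_word a p)) f" for f
    by (rule chain_system_unsolvable [OF pgroup a(1) s(1) _ avoid])
  with a(1) show ?thesis by blast
qed

theorem lemma3:
  fixes G :: "('a, 'b) monoid_scheme" and p :: nat
  assumes "Factorial_Ring.prime p"
    and "nilpotent_group G"
    and "p_group p G"
    and "reduced_group G"
    and "unbounded_period G"
  shows "\<exists>E :: ('a, nat) word set.
           (\<forall>w\<in>E. word_over G w) \<and> unimodular E \<and> \<not> (\<exists>f. solution_in G E f)"
proof -
  interpret group G using assms(2) unfolding nilpotent_group_def by blast
  obtain c where "\<gamma> c = {\<one>\<^bsub>G\<^esub>}" using assms(2) unfolding nilpotent_group_def by blast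
  then have "\<not> pow_image (Q 1) (p ^ k) \<subseteq> pow_image (Q 1) (p ^ Suc k)" for k
    using abelianization_pow_image_strict assms(1,3-5) by blast
  then obtain a where a: "\<And>i. a i \<in> carrier G"
    and unsolvable: "\<not> (\<exists>f. solution_in G (range (chain_word a p)) f)"
    using exists_unsolvable_chain_system [OF assms(3)] by blast
  have "\<forall>w\<in>range (chain_word a p). word_over G w"
    using a by (auto simp: chain_word_def word_over_def)
  with unimodular_chain_system unsolvable show ?thesis by blast
qed

end
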